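(* Let $d\ge2$ and let $A\in\mathcal{B}(\mathbb{C}^d)$ be positive definite with eigenvalues $t_1,\dots,t_d>0$ counted with multiplicity. The following are equivalent: (i) $A=A_{T,C}$ for some power bounded $T\in\mathcal{B}(\mathbb{C}^d)$ of class $C_{11}$; (ii) $\frac1{t_1}+\dots+\frac1{t_d}=d$; (iii) there is an invertible $S\in\mathcal{B}(\mathbb{C}^d)$ all of whose column vectors are unit vectors such that $A=S^{*-1}S^{-1}=(SS^* )^{-1}$.
   Context: For a power bounded matrix $T$, the Cesàro asymptotic limit is $A_{T,C}=\lim_{n\to\infty}\frac1n\sum_{j=1}^nT^{*j}T^j$ (this limit exists). For a power bounded $T$, $\mathcal{H}_0(T)=\{x:\|T^nx\|\to0\}$; $T$ is of class $C_{1\cdot}$ if $\mathcal{H}_0(T)=\{0\}$, of class $C_{\cdot1}$ if $T^*$ is of class $C_{1\cdot}$, and of class $C_{11}$ if both hold. *)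

theory Defs
  imports "Jordan_Normal_Form.Matrix" "Jordan_Normal_Form.Char_Poly"
          "Jordan_Normal_Form.Schur_Decomposition"
begin

definition cvec_norm :: "complex vec \<Rightarrow> real" where
  "cvec_norm v = sqrt (Re (v \<bullet>c v))"

definition power_bounded :: "nat \<Rightarrow> complex mat \<Rightarrow> bool" where
  "power_bounded d T \<longleftrightarrow> T \<in> carrier_mat d d \<and>
     (\<exists>C. \<forall>n. \<forall>v \<in> carrier_vec d. cvec_norm ((T ^\<^sub>m n) *\<^sub>v v) \<le> C * cvec_norm v)"

definition H0 :: "nat \<Rightarrow> complex mat \<Rightarrow> complex vec set" where
  "H0 d T = {x \<in> carrier_vec d. (\<lambda>n. cvec_norm ((T ^\<^sub>m n) *\<^sub>v x)) \<longlonglongrightarrow> 0}"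

definition class_C1dot :: "nat \<Rightarrow> complex mat \<Rightarrow> bool" where
  "class_C1dot d T \<longleftrightarrow> H0 d T = {0\<^sub>v d}"

definition class_Cdot1 :: "nat \<Rightarrow> complex mat \<Rightarrow> bool" where
  "class_Cdot1 d T \<longleftrightarrow> class_C1dot d (mat_adjoint T)"

definition class_C11 :: "nat \<Rightarrow> complex mat \<Rightarrow> bool" where
  "class_C11 d T \<longleftrightarrow> class_C1dot d T \<and> class_Cdot1 d T"

text \<open>A is the Cesaro asymptotic limit of T: (1/n) sum_{j=1..n} T*^j T^j tends to A
  (entrywise, equivalently in any norm on the finite-dimensional matrix space).\<close>
definition is_cesaro_limit :: "nat \<Rightarrow> complex mat \<Rightarrow> complex mat \<Rightarrow> bool" where
  "is_cesaro_limit d T A \<longleftrightarrow> A \<in> carrier_mat d d \<and>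
     (\<forall>i<d. \<forall>k<d. (\<lambda>n. (1 / of_nat n) *
        (\<Sum>j=1..n. ((mat_adjoint T ^\<^sub>m j) * (T ^\<^sub>m j)) $$ (i,k))) \<longlonglongrightarrow> A $$ (i,k))"

definition positive_definite :: "nat \<Rightarrow> complex mat \<Rightarrow> bool" where
  "positive_definite d A \<longleftrightarrow> A \<in> carrier_mat d d \<and> mat_adjoint A = A \<and>
     (\<forall>v \<in> carrier_vec d. v \<noteq> 0\<^sub>v d \<longrightarrow> Re ((A *\<^sub>v v) \<bullet>c v) > 0)"

end

theory Submission
  imports Defs
begin

text \<open>Write A = U diag(t) U* with U unitary, so that A^-1 = U diag(1/t) U* has trace
  1/t_1 + ... + 1/t_d.

  (i) implies (ii): the Cesaro means of T*^j T^j differ from their conjugates by T by O(1/n), so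
  T* A T = A, hence T A^-1 T* = A^-1 and tr(A^-1 T*^j T^j) = tr(A^-1) for every j. Averaging and
  passing to the limit gives tr(A^-1) = tr(A^-1 A) = d.

  (iii) implies (ii): A^-1 = S S*, whose trace is the sum of the squared column norms of S.

  (ii) implies (iii): take S = U diag(t)^(-1/2) F with F the Fourier matrix. All entries of F have
  modulus 1/sqrt d, so every column of S has squared norm (1/d) (1/t_1 + ... + 1/t_d) = 1.

  (iii) implies (i): T = S diag(1, w, ..., w^(d-1)) S^-1 with w a primitive d-th root of unity is
  power bounded, and both T and T* are of class C1. because they are similar to unitary diagonal
  matrices. The eigenvalues of T are distinct and unimodular, so the off-diagonal parts of the Cesaro
  means of T*^j T^j average out and the limit is S^-1* diag(S* S) S^-1 = S^-1* S^-1 = A.\<close>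

lemma dim_mat_adjoint [simp]:
  "dim_row (mat_adjoint M) = dim_col M" "dim_col (mat_adjoint M) = dim_row M"
  unfolding mat_adjoint_def by simp_all

lemma mat_adjoint_carrier [simp]: "M \<in> carrier_mat n m \<Longrightarrow> mat_adjoint M \<in> carrier_mat m n"
  unfolding carrier_mat_def by simp

lemma index_mat_adjoint [simp]:
  "i < dim_col M \<Longrightarrow> j < dim_row M \<Longrightarrow> mat_adjoint M $$ (i,j) = cnj (M $$ (j,i))"
  unfolding mat_adjoint_def by (subst mat_of_rows_index) auto

lemma index_mult_mat_sum:
  "i < dim_row A \<Longrightarrow> j < dim_col B \<Longrightarrow> dim_col A = dim_row B \<Longrightarrow>
   (A * B) $$ (i,j) = (\<Sum>k<dim_row B. A $$ (i,k) * B $$ (k,j))"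
  by (simp add: scalar_prod_def atLeast0LessThan)

lemma index_mult_mat3:
  assumes X: "X \<in> carrier_mat n n" and N: "N \<in> carrier_mat n n" and Y: "Y \<in> carrier_mat n n"
    and i: "i < n" and k: "k < n"
  shows "(X * N * Y) $$ (i,k) = (\<Sum>a<n. \<Sum>b<n. X $$ (i,a) * N $$ (a,b) * Y $$ (b,k))"
proof -
  have XN: "(X * N) $$ (i,b) = (\<Sum>a<n. X $$ (i,a) * N $$ (a,b))" if "b < n" for b
    using X N i that by (subst index_mult_mat_sum) auto
  have "(X * N * Y) $$ (i,k) = (\<Sum>b<n. (X * N) $$ (i,b) * Y $$ (b,k))"
    using X N Y i k by (subst index_mult_mat_sum) auto
  also have "\<dots> = (\<Sum>b<n. \<Sum>a<n. X $$ (i,a) * N $$ (a,b) * Y $$ (b,k))"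
    by (intro sum.cong refl) (simp add: XN sum_distrib_right)
  also have "\<dots> = (\<Sum>a<n. \<Sum>b<n. X $$ (i,a) * N $$ (a,b) * Y $$ (b,k))" by (rule sum.swap)
  finally show ?thesis .
qed

lemma mult_assoc_square:
  "A \<in> carrier_mat n n \<Longrightarrow> B \<in> carrier_mat n n \<Longrightarrow> C \<in> carrier_mat n n \<Longrightarrow>
   A * B * C = A * (B * C)"
  by (rule assoc_mult_mat)

lemma mult_carrier_mat_square [simp]:
  "A \<in> carrier_mat n n \<Longrightarrow> B \<in> carrier_mat n n \<Longrightarrow> A * B \<in> carrier_mat n n"
  by (rule mult_carrier_mat)

lemma mat_adjoint_mult:
  fixes A B :: "complex mat"
  assumes "dim_col A = dim_row B"
  shows "mat_adjoint (A * B) = mat_adjoint B * mat_adjoint A"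
proof (rule eq_matI)
  fix i j assume "i < dim_row (mat_adjoint B * mat_adjoint A)" "j < dim_col (mat_adjoint B * mat_adjoint A)"
  then have i: "i < dim_col B" and j: "j < dim_row A" by auto
  have "mat_adjoint (A * B) $$ (i,j) = cnj ((A * B) $$ (j,i))" using i j by simp
  also have "\<dots> = cnj (\<Sum>k<dim_row B. A $$ (j,k) * B $$ (k,i))"
    using i j assms by (subst index_mult_mat_sum) auto
  also have "\<dots> = (\<Sum>k<dim_row B. cnj (B $$ (k,i)) * cnj (A $$ (j,k)))" by (simp add: mult.commute)
  also have "\<dots> = (mat_adjoint B * mat_adjoint A) $$ (i,j)"
    using i j assms by (subst index_mult_mat_sum) auto
  finally show "mat_adjoint (A * B) $$ (i,j) = (mat_adjoint B * mat_adjoint A) $$ (i,j)" .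
qed simp_all

lemma mat_adjoint_adjoint [simp]: "mat_adjoint (mat_adjoint A) = (A :: complex mat)"
  by (rule eq_matI) simp_all

lemma mat_adjoint_one [simp]: "mat_adjoint (1\<^sub>m n :: complex mat) = 1\<^sub>m n"
  by (rule eq_matI) simp_all

lemma mat_adjoint_mat_diag: "mat_adjoint (mat_diag n f) = mat_diag n (\<lambda>i. cnj (f i))"
  by (rule eq_matI) (auto simp: mat_diag_def)

lemma pow_mat_Suc_left:
  assumes "A \<in> carrier_mat n n"
  shows "A ^\<^sub>m Suc m = A * A ^\<^sub>m m"
proof (induct m)
  case (Suc m)
  have "A ^\<^sub>m Suc (Suc m) = A * A ^\<^sub>m m * A" using Suc by simp
  then show ?case using assms by (simp add: mult_assoc_square[of _ n])
qed (use assms in simp)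

lemma mat_adjoint_pow:
  fixes T :: "complex mat"
  assumes "T \<in> carrier_mat n n"
  shows "mat_adjoint (T ^\<^sub>m m) = mat_adjoint T ^\<^sub>m m"
proof (induct m)
  case (Suc m)
  have "mat_adjoint (T ^\<^sub>m Suc m) = mat_adjoint T * mat_adjoint T ^\<^sub>m m"
    using assms Suc by (simp add: mat_adjoint_mult)
  also have "\<dots> = mat_adjoint T ^\<^sub>m Suc m"
    using assms by (intro pow_mat_Suc_left[symmetric, of _ n]) simp
  finally show ?case .
qed (use assms in simp)

lemma index_mat_adjoint_mult:
  fixes X Y :: "complex mat"
  assumes "X \<in> carrier_mat n m" "Y \<in> carrier_mat n k" "i < m" "j < k"
  shows "(mat_adjoint X * Y) $$ (i,j) = col Y j \<bullet>c col X i"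
  using assms by (simp add: index_mult_mat_sum scalar_prod_def atLeast0LessThan mult.commute)

lemma dim_mat_diag [simp]: "dim_row (mat_diag n f) = n" "dim_col (mat_diag n f) = n"
  by (simp_all add: mat_diag_def)

lemma mat_diag_pow: "mat_diag n f ^\<^sub>m k = mat_diag n (\<lambda>i. f i ^ k)"
proof (induct k)
  case 0
  show ?case by (rule eq_matI) (auto simp: mat_diag_def)
next
  case (Suc k)
  then show ?case by (simp del: power_Suc add: power_Suc2)
qed

lemma mat_diag_cong: "(\<And>i. i < n \<Longrightarrow> f i = g i) \<Longrightarrow> mat_diag n f = mat_diag n g"
  by (rule eq_matI) (auto simp: mat_diag_def)

lemma mult_mat_vec_carrier_square [simp]:
  "A \<in> carrier_mat n n \<Longrightarrow> v \<in> carrier_vec n \<Longrightarrow> A *\<^sub>v v \<in> carrier_vec n"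
  by (rule mult_mat_vec_carrier)

lemma mult_mat_vec_zero: "M \<in> carrier_mat n m \<Longrightarrow> M *\<^sub>v 0\<^sub>v m = (0\<^sub>v n :: complex vec)"
  by (rule eq_vecI) (auto simp: scalar_prod_def)

lemma invertible_mat_if_right_inverse:
  fixes S :: "'a :: field mat"
  assumes "S \<in> carrier_mat n n" "X \<in> carrier_mat n n" "S * X = 1\<^sub>m n"
  shows "invertible_mat S"
  using assms mat_mult_left_right_inverse[OF assms]
  unfolding invertible_mat_def inverts_mat_def by auto

lemma cscalar_prod_self: "v \<bullet>c v = complex_of_real (\<Sum>i<dim_vec v. (cmod (v$i))^2)"
proof -
  have "v \<bullet>c v = (\<Sum>i<dim_vec v. v$i * cnj (v$i))"
    by (simp add: scalar_prod_def atLeast0LessThan)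
  also have "\<dots> = (\<Sum>i<dim_vec v. complex_of_real ((cmod (v$i))^2))"
    by (intro sum.cong refl) (metis complex_norm_square of_real_power)
  finally show ?thesis by simp
qed

lemma cvec_norm_eq_sqrt: "cvec_norm v = sqrt (\<Sum>i<dim_vec v. (cmod (v$i))^2)"
  unfolding cvec_norm_def cscalar_prod_self by simp

lemma cvec_norm_nonneg: "cvec_norm v \<ge> 0"
  unfolding cvec_norm_eq_sqrt by (intro real_sqrt_ge_zero sum_nonneg) simp

lemma of_real_cvec_norm_square: "complex_of_real ((cvec_norm v)^2) = v \<bullet>c v"
proof -
  have "0 \<le> (\<Sum>i<dim_vec v. (cmod (v$i))^2)" by (intro sum_nonneg) simp
  then show ?thesis unfolding cvec_norm_eq_sqrt cscalar_prod_self by simp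
qed

lemma cvec_norm_eq_0_iff: "v \<in> carrier_vec n \<Longrightarrow> cvec_norm v = 0 \<longleftrightarrow> v = 0\<^sub>v n"
  using of_real_cvec_norm_square[of v] cvec_norm_nonneg[of v] conjugate_square_eq_0_vec[of v n]
  by (metis of_real_eq_0_iff power_eq_0_iff zero_less_numeral)

lemma cvec_norm_eq_1_iff: "cvec_norm v = 1 \<longleftrightarrow> v \<bullet>c v = 1"
  using of_real_cvec_norm_square[of v] cvec_norm_nonneg[of v]
  by (metis of_real_eq_1_iff power_one abs_of_nonneg real_sqrt_abs real_sqrt_one)

lemma cvec_norm_unit_vec: "b < n \<Longrightarrow> cvec_norm (unit_vec n b :: complex vec) = 1"
  unfolding cvec_norm_eq_sqrt by (simp add: if_distrib[of "\<lambda>x. (cmod x)^2"] cong: if_cong)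

lemma cvec_norm_col_eq_1_iff:
  assumes "S \<in> carrier_mat n m" "j < m"
  shows "cvec_norm (col S j) = 1 \<longleftrightarrow> (mat_adjoint S * S) $$ (j,j) = 1"
  using index_mat_adjoint_mult[OF assms(1,1,2,2)] cvec_norm_eq_1_iff by simp

lemma cscalar_prod_smult_real:
  assumes "v \<in> carrier_vec n" "w \<in> carrier_vec n"
  shows "(complex_of_real r \<cdot>\<^sub>v v) \<bullet>c (complex_of_real s \<cdot>\<^sub>v w)
    = complex_of_real (r * s) * (v \<bullet>c w)"
  using assms by (simp add: scalar_prod_def sum_distrib_left algebra_simps)

lemma cscalar_prod_normalize:
  fixes v :: "complex vec"
  assumes "v \<in> carrier_vec n" "v \<noteq> 0\<^sub>v n"
  shows "(complex_of_real (1 / cvec_norm v) \<cdot>\<^sub>v v) \<bullet>c (complex_of_real (1 / cvec_norm v) \<cdot>\<^sub>v v) = 1"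
proof -
  have N: "cvec_norm v \<noteq> 0" using cvec_norm_eq_0_iff[OF assms(1)] assms(2) by simp
  have "(complex_of_real (1 / cvec_norm v) \<cdot>\<^sub>v v) \<bullet>c (complex_of_real (1 / cvec_norm v) \<cdot>\<^sub>v v)
      = complex_of_real (1 / cvec_norm v * (1 / cvec_norm v)) * (v \<bullet>c v)"
    by (rule cscalar_prod_smult_real[OF assms(1,1)])
  also have "\<dots> = complex_of_real (1 / cvec_norm v * (1 / cvec_norm v) * (cvec_norm v)^2)"
    by (simp flip: of_real_cvec_norm_square)
  also have "\<dots> = 1" using N by (simp add: power2_eq_square)
  finally show ?thesis .
qed

lemma norm_index_le_cvec_norm: "i < dim_vec v \<Longrightarrow> cmod (v$i) \<le> cvec_norm v"
  using real_sqrt_le_mono[OF member_le_sum[of i "{..<dim_vec v}" "\<lambda>k. (cmod (v$k))^2"]]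
  unfolding cvec_norm_eq_sqrt by simp

lemma sum_squares_le_square_sum:
  fixes f :: "'a \<Rightarrow> real"
  assumes "finite A" "\<And>a. a \<in> A \<Longrightarrow> f a \<ge> 0"
  shows "(\<Sum>a\<in>A. (f a)^2) \<le> (\<Sum>a\<in>A. f a)^2"
  using assms
proof (induct A rule: finite_induct)
  case (insert x F)
  have "0 \<le> sum f F" "0 \<le> f x" using insert by (auto intro: sum_nonneg)
  then have "(f x)^2 + (sum f F)^2 \<le> (f x + sum f F)^2" by (simp add: power2_sum)
  then show ?case using insert by simp
qed simp

lemma cvec_norm_le_sum_norm: "cvec_norm w \<le> (\<Sum>i<dim_vec w. cmod (w$i))"
proof -
  have "(\<Sum>i<dim_vec w. (cmod (w$i))^2) \<le> (\<Sum>i<dim_vec w. cmod (w$i))^2"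
    by (rule sum_squares_le_square_sum) auto
  then have "cvec_norm w \<le> sqrt ((\<Sum>i<dim_vec w. cmod (w$i))^2)"
    unfolding cvec_norm_eq_sqrt by (rule real_sqrt_le_mono)
  then show ?thesis by (simp add: sum_nonneg)
qed

lemma cvec_norm_mult_mat_vec_bounded:
  assumes M: "M \<in> carrier_mat n m"
  shows "\<exists>C\<ge>0. \<forall>v\<in>carrier_vec m. cvec_norm (M *\<^sub>v v) \<le> C * cvec_norm v"
proof (intro exI[of _ "\<Sum>i<n. \<Sum>j<m. cmod (M $$ (i,j))"] conjI ballI)
  show "0 \<le> (\<Sum>i<n. \<Sum>j<m. cmod (M $$ (i,j)))" by (intro sum_nonneg) auto
  fix v :: "complex vec" assume v: "v \<in> carrier_vec m"
  have "cvec_norm (M *\<^sub>v v) \<le> (\<Sum>i<n. cmod ((M *\<^sub>v v) $ i))"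
    using cvec_norm_le_sum_norm[of "M *\<^sub>v v"] M by simp
  also have "\<dots> \<le> (\<Sum>i<n. (\<Sum>j<m. cmod (M $$ (i,j))) * cvec_norm v)"
  proof (intro sum_mono)
    fix i assume i: "i \<in> {..<n}"
    have "(M *\<^sub>v v) $ i = (\<Sum>j<m. M $$ (i,j) * v $ j)"
      using i M v by (simp add: scalar_prod_def atLeast0LessThan)
    then have "cmod ((M *\<^sub>v v) $ i) \<le> (\<Sum>j<m. cmod (M $$ (i,j)) * cmod (v $ j))"
      by (metis (no_types, lifting) norm_mult norm_sum sum.cong)
    also have "\<dots> \<le> (\<Sum>j<m. cmod (M $$ (i,j)) * cvec_norm v)"
      using v by (intro sum_mono mult_left_mono norm_index_le_cvec_norm) auto
    finally show "cmod ((M *\<^sub>v v) $ i) \<le> (\<Sum>j<m. cmod (M $$ (i,j))) * cvec_norm v"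
      by (simp add: sum_distrib_right)
  qed
  finally show "cvec_norm (M *\<^sub>v v) \<le> (\<Sum>i<n. \<Sum>j<m. cmod (M $$ (i,j))) * cvec_norm v"
    by (simp add: sum_distrib_right)
qed

lemma index_mat_diag_mult_vec:
  "v \<in> carrier_vec n \<Longrightarrow> i < n \<Longrightarrow> (mat_diag n f *\<^sub>v v) $ i = f i * v $ i"
  by (simp add: mat_diag_def scalar_prod_def atLeast0LessThan if_distrib[of "\<lambda>x. x * _"] sum.delta
      cong: if_cong)

lemma cvec_norm_mat_diag_unimodular:
  assumes "v \<in> carrier_vec n" "\<forall>a<n. cmod (f a) = 1"
  shows "cvec_norm (mat_diag n f *\<^sub>v v) = cvec_norm v"
  using assms unfolding cvec_norm_eq_sqrt
  by (simp del: index_mult_mat_vec add: index_mat_diag_mult_vec norm_mult carrier_matD[OF mat_diag_dim])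

definition mat_trace :: "complex mat \<Rightarrow> complex" where
  "mat_trace M = (\<Sum>i<dim_row M. M $$ (i,i))"

lemma mat_trace_mult_comm:
  assumes "A \<in> carrier_mat n m" "B \<in> carrier_mat m n"
  shows "mat_trace (A * B) = mat_trace (B * A)"
proof -
  have "mat_trace (A * B) = (\<Sum>i<n. \<Sum>k<m. A $$ (i,k) * B $$ (k,i))"
    unfolding mat_trace_def using assms by (intro sum.cong) (auto simp: scalar_prod_def atLeast0LessThan)
  also have "\<dots> = (\<Sum>k<m. \<Sum>i<n. B $$ (k,i) * A $$ (i,k))"
    by (subst sum.swap) (simp add: mult.commute)
  also have "\<dots> = mat_trace (B * A)"
    unfolding mat_trace_def using assms by (intro sum.cong) (auto simp: scalar_prod_def atLeast0LessThan)
  finally show ?thesis .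
qed

lemma mat_trace_one [simp]: "mat_trace (1\<^sub>m n) = of_nat n"
  unfolding mat_trace_def by simp

lemma mat_trace_mat_diag [simp]: "mat_trace (mat_diag n f) = (\<Sum>i<n. f i)"
  unfolding mat_trace_def mat_diag_def by simp

lemma mat_trace_gram_unit_columns:
  assumes S: "S \<in> carrier_mat n n" and cols: "\<forall>j<n. cvec_norm (col S j) = 1"
  shows "mat_trace (S * mat_adjoint S) = of_nat n"
proof -
  have "mat_trace (S * mat_adjoint S) = mat_trace (mat_adjoint S * S)"
    using S by (intro mat_trace_mult_comm) auto
  also have "\<dots> = (\<Sum>j<n. 1)"
    unfolding mat_trace_def using S cols cvec_norm_col_eq_1_iff[OF S] by (intro sum.cong) auto
  finally show ?thesis by simp
qed

definition unitary_mat :: "nat \<Rightarrow> complex mat \<Rightarrow> bool" where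
  "unitary_mat n U \<longleftrightarrow>
     U \<in> carrier_mat n n \<and> mat_adjoint U * U = 1\<^sub>m n \<and> U * mat_adjoint U = 1\<^sub>m n"

lemma unitary_matI:
  assumes "U \<in> carrier_mat n n" "mat_adjoint U * U = 1\<^sub>m n"
  shows "unitary_mat n U"
  using assms mat_mult_left_right_inverse[of "mat_adjoint U" n U] unfolding unitary_mat_def by auto

lemma unitary_mat_mult:
  assumes "unitary_mat n U" "unitary_mat n V"
  shows "unitary_mat n (U * V)"
proof (rule unitary_matI)
  have U: "U \<in> carrier_mat n n" and V: "V \<in> carrier_mat n n" using assms unfolding unitary_mat_def by auto
  show "U * V \<in> carrier_mat n n" using U V by simp
  have "mat_adjoint (U * V) * (U * V) = mat_adjoint V * (mat_adjoint U * U) * V"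
    using U V by (simp add: mat_adjoint_mult mult_assoc_square[of _ n])
  then show "mat_adjoint (U * V) * (U * V) = 1\<^sub>m n" using assms V unfolding unitary_mat_def by simp
qed

lemma unitary_conj_mult:
  assumes "unitary_mat n U" "X \<in> carrier_mat n n" "Y \<in> carrier_mat n n"
  shows "(U * X * mat_adjoint U) * (U * Y * mat_adjoint U) = U * (X * Y) * mat_adjoint U"
proof -
  have U: "U \<in> carrier_mat n n" and UU: "mat_adjoint U * U = 1\<^sub>m n"
    using assms(1) unfolding unitary_mat_def by auto
  have "(U * X * mat_adjoint U) * (U * Y * mat_adjoint U) = U * (X * (mat_adjoint U * U) * Y) * mat_adjoint U"
    using U assms(2,3) by (simp add: mult_assoc_square[of _ n])
  then show ?thesis using UU assms(2) by simp
qed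

lemma mat_trace_unitary_conj:
  assumes "unitary_mat n U" "X \<in> carrier_mat n n"
  shows "mat_trace (U * X * mat_adjoint U) = mat_trace X"
proof -
  have U: "U \<in> carrier_mat n n" and UU: "mat_adjoint U * U = 1\<^sub>m n"
    using assms(1) unfolding unitary_mat_def by auto
  have "mat_trace (U * X * mat_adjoint U) = mat_trace (X * mat_adjoint U * U)"
    using U assms(2) by (subst mult_assoc_square[of _ n], auto intro: mat_trace_mult_comm)
  also have "\<dots> = mat_trace X" using U assms(2) UU by (simp add: mult_assoc_square[of _ n])
  finally show ?thesis .
qed

section \<open>Unitary diagonalisation of positive definite matrices\<close>

lemma unitary_mat_of_cols:
  assumes len: "length us = n" and carr: "\<And>i. i < n \<Longrightarrow> us ! i \<in> carrier_vec n"
    and orth: "\<And>i j. i < n \<Longrightarrow> j < n \<Longrightarrow> us ! j \<bullet>c us ! i = (if i = j then 1 else 0)"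
  shows "unitary_mat n (mat_of_cols n us)"
proof (rule unitary_matI)
  show W: "mat_of_cols n us \<in> carrier_mat n n" using len by auto
  have colW: "col (mat_of_cols n us) i = us ! i" if "i < n" for i using len carr that by simp
  show "mat_adjoint (mat_of_cols n us) * mat_of_cols n us = 1\<^sub>m n"
  proof (rule eq_matI)
    fix i j assume "i < dim_row (1\<^sub>m n :: complex mat)" "j < dim_col (1\<^sub>m n :: complex mat)"
    then have i: "i < n" and j: "j < n" by auto
    show "(mat_adjoint (mat_of_cols n us) * mat_of_cols n us) $$ (i,j) = 1\<^sub>m n $$ (i,j)"
      using index_mat_adjoint_mult[OF W W i j] colW[OF i] colW[OF j] orth[OF i j] i j by auto
  qed (use W in auto)
qed

lemma exists_unitary_first_col:
  fixes v :: "complex vec"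
  assumes v: "v \<in> carrier_vec n" and v1: "v \<bullet>c v = 1"
  shows "\<exists>W. unitary_mat n W \<and> col W 0 = v"
proof -
  have v0: "v \<noteq> 0\<^sub>v n" using v1 by auto
  interpret cof_vec_space n "TYPE(complex)" .
  define b where "b = basis_completion v"
  from basis_completion[OF v v0, folded b_def]
  have b: "distinct b" "\<not> lin_dep (set b)" "set b \<subseteq> carrier_vec n" "hd b = v" "length b = n"
    by auto
  have n: "n > 0" using v v0 by (cases n) auto
  then obtain vs where bv: "b = v # vs" using b(4,5) by (cases b) auto
  define ws where "ws = gram_schmidt n b"
  from gram_schmidt_result[OF b(3,1,2) refl, folded ws_def]
  have ws: "set ws \<subseteq> carrier_vec n" "corthogonal ws" "length ws = n" by (auto simp: b(5))
  have ws0: "ws ! 0 = v"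
    using gram_schmidt_hd[OF v, of vs, folded bv ws_def] ws(3) n by (cases ws) auto
  have wsi: "ws ! i \<in> carrier_vec n" "ws ! i \<noteq> 0\<^sub>v n" if "i < n" for i
    using ws corthogonalD[OF ws(2), of i i] that by auto
  define us where "us = map (\<lambda>w. complex_of_real (1 / cvec_norm w) \<cdot>\<^sub>v w) ws"
  have us: "length us = n" "\<And>i. i < n \<Longrightarrow> us ! i \<in> carrier_vec n"
    unfolding us_def using ws wsi by auto
  have us_orth: "us ! j \<bullet>c us ! i = (if i = j then 1 else 0)" if "i < n" "j < n" for i j
  proof (cases "i = j")
    case True
    then show ?thesis using cscalar_prod_normalize[OF wsi[OF that(1)]] that ws(3) by (simp add: us_def)
  next
    case False
    have "ws ! j \<bullet>c ws ! i = 0" using corthogonalD[OF ws(2)] that ws(3) False by auto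
    moreover have "us ! j \<bullet>c us ! i = complex_of_real (1 / cvec_norm (ws ! j) * (1 / cvec_norm (ws ! i)))
        * (ws ! j \<bullet>c ws ! i)"
      unfolding us_def using that ws(3) cscalar_prod_smult_real[OF wsi(1)[OF that(2)] wsi(1)[OF that(1)]]
      by (simp only: nth_map)
    ultimately show ?thesis using False by simp
  qed
  have "col (mat_of_cols n us) 0 = us ! 0" using us n by simp
  also have "us ! 0 = v" using ws0 v1 cvec_norm_eq_1_iff[of v] ws(3) n by (simp add: us_def)
  finally show ?thesis using unitary_mat_of_cols[OF us us_orth] by blast
qed

lemma unitary_four_block_one:
  assumes "unitary_mat m U"
  shows "unitary_mat (Suc m) (four_block_mat (1\<^sub>m 1) (0\<^sub>m 1 m) (0\<^sub>m m 1) U)"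
    (is "unitary_mat _ ?B")
proof (rule unitary_matI)
  have U: "U \<in> carrier_mat m m" and UU: "mat_adjoint U * U = 1\<^sub>m m"
    using assms unfolding unitary_mat_def by auto
  show B: "?B \<in> carrier_mat (Suc m) (Suc m)" using U by auto
  have "mat_adjoint ?B = four_block_mat (1\<^sub>m 1) (0\<^sub>m 1 m) (0\<^sub>m m 1) (mat_adjoint U)"
    using U B by (intro eq_matI) (auto simp: index_mat_four_block)
  also have "\<dots> * ?B = 1\<^sub>m (Suc m)"
    by (subst mult_four_block_mat[OF one_carrier_mat zero_carrier_mat zero_carrier_mat
          mat_adjoint_carrier[OF U] one_carrier_mat zero_carrier_mat zero_carrier_mat U]) (use U UU in simp)
  finally show "mat_adjoint ?B * ?B = 1\<^sub>m (Suc m)" .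
qed

lemma unitary_deflation:
  fixes A :: "complex mat"
  assumes A: "A \<in> carrier_mat n n" and e: "eigenvalue A e"
  shows "\<exists>W A2 A3. unitary_mat n W \<and> A2 \<in> carrier_mat 1 (n - 1) \<and> A3 \<in> carrier_mat (n - 1) (n - 1)
           \<and> mat_adjoint W * A * W = four_block_mat (mat 1 1 (\<lambda>_. e)) A2 (0\<^sub>m (n - 1) 1) A3"
proof -
  obtain v0 where "eigenvector A v0 e" using find_eigenvector[OF A e] by blast
  then have v0: "v0 \<in> carrier_vec n" "v0 \<noteq> 0\<^sub>v n" "A *\<^sub>v v0 = e \<cdot>\<^sub>v v0"
    using A unfolding eigenvector_def by auto
  define v where "v = complex_of_real (1 / cvec_norm v0) \<cdot>\<^sub>v v0"
  have v: "v \<in> carrier_vec n" "v \<bullet>c v = 1" "A *\<^sub>v v = e \<cdot>\<^sub>v v"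
    using v0 A cscalar_prod_normalize[OF v0(1,2)] unfolding v_def
    by (auto simp: mult_mat_vec[of A n n] smult_smult_assoc mult.commute)
  obtain W where uW: "unitary_mat n W" and W0: "col W 0 = v"
    using exists_unitary_first_col[OF v(1,2)] by blast
  have W: "W \<in> carrier_mat n n" and WW: "mat_adjoint W * W = 1\<^sub>m n"
    using uW unfolding unitary_mat_def by auto
  have n: "n > 0" using v0(1,2) by (cases n) auto
  define A' where "A' = mat_adjoint W * A * W"
  have A': "A' \<in> carrier_mat n n" unfolding A'_def using W A by auto
  have col0: "A' $$ (i,0) = (if i = 0 then e else 0)" if i: "i < n" for i
  proof -
    have "A' $$ (i,0) = (mat_adjoint W * (A * W)) $$ (i,0)"
      unfolding A'_def using W A by (subst mult_assoc_square[of _ n]) auto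
    also have "\<dots> = col (A * W) 0 \<bullet>c col W i"
      using W A i n by (intro index_mat_adjoint_mult) auto
    also have "col (A * W) 0 = e \<cdot>\<^sub>v v" using A W n W0 v(3) by (simp del: col_mult)
    also have "(e \<cdot>\<^sub>v v) \<bullet>c col W i = e * (col W 0 \<bullet>c col W i)"
      using W n i v W0 by (simp add: scalar_prod_def sum_distrib_left algebra_simps)
    also have "\<dots> = (if i = 0 then e else 0)"
      using WW i n index_mat_adjoint_mult[OF W W i n] by (auto dest: arg_cong[of _ _ "\<lambda>M. M $$ (i,0)"])
    finally show ?thesis .
  qed
  obtain A1 A2 A0 A3 where splitA': "split_block A' 1 1 = (A1,A2,A0,A3)"
    by (cases "split_block A' 1 1") auto
  have "dim_row A' = 1 + (n - 1)" "dim_col A' = 1 + (n - 1)" using A' n by auto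
  note blocks = split_block[OF splitA' this]
  have "A1 = mat 1 1 (\<lambda>(i,j). A' $$ (i,j))" "A0 = mat (n - 1) 1 (\<lambda>(i,j). A' $$ (Suc i, j))"
    using splitA' A' unfolding split_block_def Let_def by auto
  then have "A1 = mat 1 1 (\<lambda>_. e)" and "A0 = 0\<^sub>m (n - 1) 1"
    using col0 n by (auto intro!: eq_matI)
  then show ?thesis using uW blocks unfolding A'_def by auto
qed

lemma char_poly_unitary_deflation:
  fixes A :: "complex mat"
  assumes A: "A \<in> carrier_mat n n" and uW: "unitary_mat n W"
    and A2: "A2 \<in> carrier_mat 1 (n - 1)" and A3: "A3 \<in> carrier_mat (n - 1) (n - 1)"
    and WAW: "mat_adjoint W * A * W = four_block_mat (mat 1 1 (\<lambda>_. e)) A2 (0\<^sub>m (n - 1) 1) A3"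
    and cp: "char_poly A = [:-e,1:] * p"
  shows "char_poly A3 = p"
proof -
  have W: "W \<in> carrier_mat n n" using uW unfolding unitary_mat_def by auto
  have sim: "similar_mat (mat_adjoint W * A * W) A"
    using A W uW unfolding unitary_mat_def
    by (intro similar_matI[of _ A "mat_adjoint W" W n]) (auto simp: mult_assoc_square[of _ n])
  have "char_poly (mat_adjoint W * A * W) = char_poly (mat 1 1 (\<lambda>_. e)) * char_poly A3"
    unfolding WAW by (rule char_poly_four_block_zeros_col[OF _ A2 A3]) simp
  also have "char_poly (mat 1 1 (\<lambda>_. e)) = [:-e,1:]" by (simp add: char_poly_defs det_def sign_def)
  finally have "[:-e,1:] * char_poly A3 = [:-e,1:] * p" using char_poly_similar[OF sim] cp by simp
  then show ?thesis by (metis mult_cancel_left pCons_eq_0_iff zero_neq_one)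
qed

text \<open>The triangularising similarity of the Jordan normal form library is not unitary, so the induction
  is redone with unitary deflations.\<close>
lemma unitary_schur:
  assumes "A \<in> carrier_mat n n" "char_poly A = (\<Prod>e\<leftarrow>es. [:- e, 1:])"
  shows "\<exists>U. unitary_mat n U \<and> upper_triangular (mat_adjoint U * A * U)
           \<and> diag_mat (mat_adjoint U * A * U) = es"
  using assms
proof (induct es arbitrary: n A)
  case Nil
  then have "n = 0" using degree_monic_char_poly[of A n] by auto
  then show ?case using Nil
    by (intro exI[of _ "1\<^sub>m 0"]) (auto simp: unitary_mat_def upper_triangular_def diag_mat_def)
next
  case (Cons e es n A)
  note A = Cons(2)
  have cp: "char_poly A = [:-e,1:] * (\<Prod>e\<leftarrow>es. [:-e,1:])" using Cons(3) by simp
  then have e: "eigenvalue A e" using eigenvalue_root_char_poly[OF A] by simp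
  then have n: "n > 0" using A by (cases n) (auto simp: eigenvalue_def eigenvector_def)
  let ?E = "mat 1 1 (\<lambda>_. e) :: complex mat"
  obtain W A2 A3 where uW: "unitary_mat n W" and A2: "A2 \<in> carrier_mat 1 (n - 1)"
    and A3: "A3 \<in> carrier_mat (n - 1) (n - 1)"
    and WAW: "mat_adjoint W * A * W = four_block_mat ?E A2 (0\<^sub>m (n - 1) 1) A3"
    using unitary_deflation[OF A e] by blast
  have W: "W \<in> carrier_mat n n" using uW unfolding unitary_mat_def by auto
  from Cons(1)[OF A3 char_poly_unitary_deflation[OF A uW A2 A3 WAW cp]]
  obtain U3 where U3: "unitary_mat (n - 1) U3" and ut3: "upper_triangular (mat_adjoint U3 * A3 * U3)"
    and dg3: "diag_mat (mat_adjoint U3 * A3 * U3) = es" by blast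
  have U3c: "U3 \<in> carrier_mat (n - 1) (n - 1)" using U3 unfolding unitary_mat_def by auto
  define B where "B = four_block_mat (1\<^sub>m 1) (0\<^sub>m 1 (n - 1)) (0\<^sub>m (n - 1) 1) U3"
  have uB: "unitary_mat n B" using unitary_four_block_one[OF U3] n unfolding B_def by simp
  have B: "B \<in> carrier_mat n n" using uB unfolding unitary_mat_def by auto
  have "mat_adjoint (W * B) * A * (W * B) = mat_adjoint B * (mat_adjoint W * A * W) * B"
    using W B A by (simp add: mat_adjoint_mult mult_assoc_square[of _ n])
  also have "mat_adjoint B = four_block_mat (1\<^sub>m 1) (0\<^sub>m 1 (n - 1)) (0\<^sub>m (n - 1) 1) (mat_adjoint U3)"
    using U3c B n unfolding B_def by (intro eq_matI) (auto simp: index_mat_four_block)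
  also have "\<dots> * (mat_adjoint W * A * W) * B
      = four_block_mat ?E (A2 * U3) (0\<^sub>m (n - 1) 1) (mat_adjoint U3 * A3 * U3)"
    unfolding WAW B_def using A2 A3 U3c
    by (simp add: mult_four_block_mat[of _ 1 1 _ "n - 1" _ "n - 1" _ _ 1 _ "n - 1"])
  finally have blocks: "mat_adjoint (W * B) * A * (W * B) = \<dots>" .
  have B3: "mat_adjoint U3 * A3 * U3 \<in> carrier_mat (n - 1) (n - 1)" using U3c A3 by simp
  have E: "?E \<in> carrier_mat 1 1" "upper_triangular ?E" by (auto simp: upper_triangular_def)
  show ?case
  proof (intro exI[of _ "W * B"] conjI unitary_mat_mult[OF uW uB])
    show "upper_triangular (mat_adjoint (W * B) * A * (W * B))"
      unfolding blocks by (rule upper_triangular_four_block[OF E(1) B3 E(2) ut3])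
    show "diag_mat (mat_adjoint (W * B) * A * (W * B)) = e # es"
      unfolding blocks diag_four_block_mat[OF E(1) B3] dg3 by (simp add: diag_mat_def)
  qed
qed

lemma hermitian_upper_triangular_eq_mat_diag:
  fixes B :: "complex mat"
  assumes B: "B \<in> carrier_mat n n" and herm: "mat_adjoint B = B" and ut: "upper_triangular B"
  shows "B = mat_diag n (\<lambda>i. B $$ (i,i))"
proof (rule eq_matI)
  fix i j assume "i < dim_row (mat_diag n (\<lambda>i. B $$ (i,i)))" "j < dim_col (mat_diag n (\<lambda>i. B $$ (i,i)))"
  then have i: "i < n" and j: "j < n" by auto
  have "B $$ (i,j) = 0" if "i \<noteq> j"
  proof (cases "j < i")
    case True
    then show ?thesis using ut i B unfolding upper_triangular_def by auto
  next
    case False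
    then have "B $$ (j,i) = 0" using ut j that B unfolding upper_triangular_def by auto
    moreover have "B $$ (i,j) = cnj (B $$ (j,i))" using B i j by (subst herm[symmetric]) simp
    ultimately show ?thesis by simp
  qed
  then show "B $$ (i,j) = mat_diag n (\<lambda>i. B $$ (i,i)) $$ (i,j)" using i j by (auto simp: mat_diag_def)
qed (use B in auto)

lemma positive_definite_unitary_diag:
  assumes pd: "positive_definite d A" and len: "length ts = d"
    and cp: "char_poly A = (\<Prod>t\<leftarrow>ts. [:- complex_of_real t, 1:])"
  shows "\<exists>U. unitary_mat d U \<and> A = U * mat_diag d (\<lambda>i. complex_of_real (ts ! i)) * mat_adjoint U
           \<and> (\<forall>i<d. ts ! i > 0)"
proof -
  have A: "A \<in> carrier_mat d d" and herm: "mat_adjoint A = A"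
    and pos: "\<And>v. v \<in> carrier_vec d \<Longrightarrow> v \<noteq> 0\<^sub>v d \<Longrightarrow> Re ((A *\<^sub>v v) \<bullet>c v) > 0"
    using pd unfolding positive_definite_def by auto
  have "char_poly A = (\<Prod>e\<leftarrow>map complex_of_real ts. [:- e, 1:])" using cp by (simp add: o_def)
  from unitary_schur[OF A this] obtain U where uU: "unitary_mat d U"
    and ut: "upper_triangular (mat_adjoint U * A * U)"
    and dg: "diag_mat (mat_adjoint U * A * U) = map complex_of_real ts" by blast
  have U: "U \<in> carrier_mat d d" and UU: "mat_adjoint U * U = 1\<^sub>m d" and UU': "U * mat_adjoint U = 1\<^sub>m d"
    using uU unfolding unitary_mat_def by auto
  define B where "B = mat_adjoint U * A * U"
  have B: "B \<in> carrier_mat d d" unfolding B_def using U A by simp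
  have Bii: "B $$ (i,i) = complex_of_real (ts ! i)" if "i < d" for i
    using arg_cong[OF dg, of "\<lambda>xs. xs ! i"] that B len unfolding B_def[symmetric] diag_mat_def by simp
  have "mat_adjoint B = B"
    unfolding B_def using U A herm by (simp add: mat_adjoint_mult mult_assoc_square[of _ d])
  then have "B = mat_diag d (\<lambda>i. B $$ (i,i))"
    using hermitian_upper_triangular_eq_mat_diag[OF B _ ut[folded B_def]] by simp
  also have "\<dots> = mat_diag d (\<lambda>i. complex_of_real (ts ! i))" using Bii by (rule mat_diag_cong)
  finally have Bdiag: "B = mat_diag d (\<lambda>i. complex_of_real (ts ! i))" .
  have "U * B * mat_adjoint U = (U * mat_adjoint U) * A * (U * mat_adjoint U)"
    unfolding B_def using U A by (simp add: mult_assoc_square[of _ d])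
  then have "A = U * mat_diag d (\<lambda>i. complex_of_real (ts ! i)) * mat_adjoint U"
    using UU' A Bdiag by simp
  moreover have "ts ! i > 0" if i: "i < d" for i
  proof -
    have "col U i \<bullet>c col U i = 1" using index_mat_adjoint_mult[OF U U i i] UU i by simp
    then have "col U i \<noteq> 0\<^sub>v d" by auto
    moreover have "B $$ (i,i) = (mat_adjoint U * (A * U)) $$ (i,i)"
      unfolding B_def using U A by (subst mult_assoc_square[of _ d]) auto
    then have "B $$ (i,i) = (A *\<^sub>v col U i) \<bullet>c col U i"
      using U A i index_mat_adjoint_mult[of U d d "A * U" d i i] by (simp del: col_mult)
    ultimately have "Re (B $$ (i,i)) > 0" using pos[of "col U i"] U i by simp
    then show ?thesis using Bii[OF i] by simp
  qed
  ultimately show ?thesis using uU by blast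
qed

lemma unitary_conj_mat_diag_inverse:
  assumes "unitary_mat n U" "\<forall>i<n. f i \<noteq> 0"
  shows "(U * mat_diag n f * mat_adjoint U) * (U * mat_diag n (\<lambda>i. 1 / f i) * mat_adjoint U) = 1\<^sub>m n"
proof -
  have "mat_diag n f * mat_diag n (\<lambda>i. 1 / f i) = mat_diag n (\<lambda>_. 1)"
    unfolding mat_diag_diag using assms(2) by (intro mat_diag_cong) simp
  moreover have "U \<in> carrier_mat n n" "U * mat_adjoint U = 1\<^sub>m n"
    using assms(1) unfolding unitary_mat_def by auto
  ultimately show ?thesis by (simp add: unitary_conj_mult[OF assms(1) mat_diag_dim mat_diag_dim])
qed

section \<open>Roots of unity and the Fourier matrix\<close>

lemma cis_root_of_unity_ne_1:
  fixes m :: int and n :: nat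
  assumes "m \<noteq> 0" "\<bar>m\<bar> < int n"
  shows "cis (2 * pi * of_int m / real n) \<noteq> 1"
proof
  assume "cis (2 * pi * of_int m / real n) = 1"
  then obtain k :: int where "2 * pi * of_int m / real n = of_int k * 2 * pi"
    by (auto simp: complex_eq_iff cos_one_2pi_int)
  then have "real_of_int m = real n * of_int k" using assms by (simp add: field_simps)
  then have mk: "m = int n * k" by (metis of_int_eq_iff of_int_mult of_int_of_nat_eq)
  then have "1 \<le> \<bar>k\<bar>" using assms(1) by auto
  then have "int n \<le> \<bar>m\<bar>" unfolding mk abs_mult by (simp add: mult_le_cancel_left1)
  then show False using assms(2) by simp
qed

lemma sum_powers_root_of_unity:
  fixes m :: int and n :: nat
  assumes "m \<noteq> 0" "\<bar>m\<bar> < int n"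
  shows "(\<Sum>k<n. cis (2 * pi * of_int m / real n) ^ k) = 0"
proof -
  have "n > 0" using assms by simp
  then have "cis (2 * pi * of_int m / real n) ^ n = 1"
    by (simp add: DeMoivre cis_multiple_2pi)
  then show ?thesis using cis_root_of_unity_ne_1[OF assms] by (simp add: geometric_sum)
qed

lemma inj_on_roots_of_unity: "inj_on (\<lambda>a. cis (2 * pi * real a / real n)) {..<n}"
proof (rule inj_onI)
  fix a b assume a: "a \<in> {..<n}" and b: "b \<in> {..<n}"
    and eq: "cis (2 * pi * real a / real n) = cis (2 * pi * real b / real n)"
  have "cis (2 * pi * of_int (int a - int b) / real n)
      = cis (2 * pi * real a / real n) * cnj (cis (2 * pi * real b / real n))"
    by (simp add: cis_cnj cis_mult diff_divide_distrib algebra_simps)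
  also have "\<dots> = 1" unfolding eq by (simp add: cis_cnj cis_mult)
  finally show "a = b" using cis_root_of_unity_ne_1[of "int a - int b" n] a b by fastforce
qed

definition fourier_mat :: "nat \<Rightarrow> complex mat" where
  "fourier_mat d = mat d d (\<lambda>(k,j). cis (2 * pi * real k * real j / real d) / complex_of_real (sqrt (real d)))"

lemma fourier_mat_carrier [simp]: "fourier_mat d \<in> carrier_mat d d"
  by (simp add: fourier_mat_def)

lemma fourier_mat_mult_adjoint: "fourier_mat d * mat_adjoint (fourier_mat d) = 1\<^sub>m d"
proof (rule eq_matI)
  fix j l assume "j < dim_row (1\<^sub>m d :: complex mat)" "l < dim_col (1\<^sub>m d :: complex mat)"
  then have j: "j < d" and l: "l < d" by auto
  define z where "z = cis (2 * pi * of_int (int j - int l) / real d)"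
  have "(fourier_mat d * mat_adjoint (fourier_mat d)) $$ (j,l)
      = (\<Sum>k<d. cis (2 * pi * real j * real k / real d) * cnj (cis (2 * pi * real l * real k / real d)))
        / of_nat d"
    using j l unfolding sum_divide_distrib
    by (subst index_mult_mat_sum) (auto simp: fourier_mat_def simp flip: of_real_mult intro!: sum.cong)
  also have "\<dots> = (\<Sum>k<d. z ^ k) / of_nat d"
    unfolding z_def DeMoivre
    by (intro arg_cong2[of _ _ _ _ "(/)"] sum.cong refl)
      (simp add: cis_cnj cis_mult diff_divide_distrib algebra_simps)
  also have "\<dots> = 1\<^sub>m d $$ (j,l)"
    using sum_powers_root_of_unity[of "int j - int l" d] j l by (simp add: z_def)
  finally show "(fourier_mat d * mat_adjoint (fourier_mat d)) $$ (j,l) = 1\<^sub>m d $$ (j,l)" .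
qed (simp_all add: fourier_mat_def)

lemma cnj_fourier_mat_mult:
  assumes "k < d" "j < d"
  shows "cnj (fourier_mat d $$ (k,j)) * fourier_mat d $$ (k,j) = 1 / of_nat d"
  using assms by (simp add: fourier_mat_def cis_cnj cis_mult flip: of_real_mult)

lemma exists_unit_columns_factor:
  fixes s :: "nat \<Rightarrow> real"
  assumes pos: "\<forall>i<d. s i > 0" and sum: "(\<Sum>i<d. s i) = real d"
  shows "\<exists>S. S \<in> carrier_mat d d \<and> S * mat_adjoint S = mat_diag d (\<lambda>i. complex_of_real (s i))
           \<and> (\<forall>j<d. cvec_norm (col S j) = 1)"
proof -
  define F where "F = fourier_mat d"
  define D where "D = mat_diag d (\<lambda>i. complex_of_real (sqrt (s i)))"
  have F: "F \<in> carrier_mat d d" and D: "D \<in> carrier_mat d d" unfolding F_def D_def by auto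
  have sqrt_sq: "complex_of_real (sqrt (s i)) * cnj (complex_of_real (sqrt (s i))) = complex_of_real (s i)"
    if "i < d" for i
    using pos that by (simp add: abs_of_pos flip: of_real_mult)
  have "D * F * mat_adjoint (D * F) = D * (F * mat_adjoint F) * mat_adjoint D"
    using D F by (simp add: mat_adjoint_mult mult_assoc_square[of _ d])
  also have "\<dots> = D * mat_adjoint D" using D unfolding F_def fourier_mat_mult_adjoint by simp
  also have "\<dots> = mat_diag d (\<lambda>i. complex_of_real (s i))"
    unfolding D_def mat_adjoint_mat_diag mat_diag_diag using sqrt_sq by (rule mat_diag_cong)
  finally have gram: "D * F * mat_adjoint (D * F) = mat_diag d (\<lambda>i. complex_of_real (s i))" .
  have "(mat_adjoint (D * F) * (D * F)) $$ (j,j) = 1" if j: "j < d" for j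
  proof -
    have "mat_adjoint (D * F) * (D * F) = mat_adjoint F * ((mat_adjoint D * D) * F)"
      using D F by (simp add: mat_adjoint_mult mult_assoc_square[of _ d])
    also have "mat_adjoint D * D = mat_diag d (\<lambda>i. complex_of_real (s i))"
      unfolding D_def mat_adjoint_mat_diag mat_diag_diag using sqrt_sq by (intro mat_diag_cong) (simp add: mult.commute)
    finally have "(mat_adjoint (D * F) * (D * F)) $$ (j,j)
        = (\<Sum>k<d. cnj (F $$ (k,j)) * (complex_of_real (s k) * F $$ (k,j)))"
      using F j by (simp add: mat_diag_mult_left[OF F] index_mult_mat_sum del: index_mult_mat)
    also have "\<dots> = (\<Sum>k<d. complex_of_real (s k)) / of_nat d"
      unfolding sum_divide_distrib using j cnj_fourier_mat_mult[of _ d j]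
      by (intro sum.cong refl) (simp add: F_def algebra_simps)
    also have "\<dots> = 1" using sum j by (simp flip: of_real_sum)
    finally show ?thesis .
  qed
  then show ?thesis using gram D F cvec_norm_col_eq_1_iff[of "D * F" d d] by (intro exI[of _ "D * F"]) auto
qed

section \<open>Cesaro means of matrix sequences\<close>

definition mat_tendsto :: "nat \<Rightarrow> (nat \<Rightarrow> complex mat) \<Rightarrow> complex mat \<Rightarrow> bool" where
  "mat_tendsto n X Y \<longleftrightarrow> (\<forall>i<n. \<forall>k<n. (\<lambda>m. X m $$ (i,k)) \<longlonglongrightarrow> Y $$ (i,k))"

definition cesaro_mean :: "nat \<Rightarrow> (nat \<Rightarrow> complex mat) \<Rightarrow> nat \<Rightarrow> complex mat" where
  "cesaro_mean n E m = mat n n (\<lambda>(i,k). (1 / of_nat m) * (\<Sum>j=1..m. E j $$ (i,k)))"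

lemma cesaro_mean_carrier [simp]: "cesaro_mean n E m \<in> carrier_mat n n"
  and dim_cesaro_mean [simp]: "dim_row (cesaro_mean n E m) = n" "dim_col (cesaro_mean n E m) = n"
  by (simp_all add: cesaro_mean_def)

lemma is_cesaro_limit_iff:
  "is_cesaro_limit d T A \<longleftrightarrow>
     A \<in> carrier_mat d d \<and> mat_tendsto d (cesaro_mean d (\<lambda>j. mat_adjoint T ^\<^sub>m j * T ^\<^sub>m j)) A"
  unfolding is_cesaro_limit_def mat_tendsto_def cesaro_mean_def by simp

lemma mat_tendsto_unique:
  assumes "mat_tendsto n X Y" "mat_tendsto n X Z" "Y \<in> carrier_mat n n" "Z \<in> carrier_mat n n"
  shows "Y = Z"
proof (rule eq_matI)
  fix i k assume "i < dim_row Z" "k < dim_col Z"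
  then have "i < n" "k < n" using assms(4) by auto
  then show "Y $$ (i,k) = Z $$ (i,k)"
    using assms(1,2) LIMSEQ_unique unfolding mat_tendsto_def by blast
qed (use assms in auto)

lemma mat_tendsto_mult3:
  assumes lim: "mat_tendsto n X Y" and X: "\<And>m. X m \<in> carrier_mat n n"
    and P: "P \<in> carrier_mat n n" and Y: "Y \<in> carrier_mat n n" and Q: "Q \<in> carrier_mat n n"
  shows "mat_tendsto n (\<lambda>m. P * X m * Q) (P * Y * Q)"
  unfolding mat_tendsto_def
proof (intro allI impI)
  fix i k assume i: "i < n" and k: "k < n"
  have "(\<lambda>m. \<Sum>a<n. \<Sum>b<n. P $$ (i,a) * X m $$ (a,b) * Q $$ (b,k))
      \<longlonglongrightarrow> (\<Sum>a<n. \<Sum>b<n. P $$ (i,a) * Y $$ (a,b) * Q $$ (b,k))"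
    using lim unfolding mat_tendsto_def by (intro tendsto_intros) auto
  then show "(\<lambda>m. (P * X m * Q) $$ (i,k)) \<longlonglongrightarrow> (P * Y * Q) $$ (i,k)"
    by (simp only: index_mult_mat3[OF P X Q i k] index_mult_mat3[OF P Y Q i k])
qed

lemma mat_tendsto_trace:
  assumes lim: "mat_tendsto n X Y" and X: "\<And>m. X m \<in> carrier_mat n n" and Y: "Y \<in> carrier_mat n n"
  shows "(\<lambda>m. mat_trace (X m)) \<longlonglongrightarrow> mat_trace Y"
proof -
  have "(\<lambda>m. \<Sum>i<n. X m $$ (i,i)) \<longlonglongrightarrow> (\<Sum>i<n. Y $$ (i,i))"
    using lim unfolding mat_tendsto_def by (intro tendsto_sum) auto
  then show ?thesis using Y unfolding mat_trace_def by (simp add: carrier_matD(1)[OF X])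
qed

lemma cesaro_mean_mult3:
  assumes E: "\<And>j. E j \<in> carrier_mat n n" and P: "P \<in> carrier_mat n n" and Q: "Q \<in> carrier_mat n n"
  shows "cesaro_mean n (\<lambda>j. P * E j * Q) m = P * cesaro_mean n E m * Q"
proof (rule eq_matI)
  fix i k assume "i < dim_row (P * cesaro_mean n E m * Q)" "k < dim_col (P * cesaro_mean n E m * Q)"
  then have i: "i < n" and k: "k < n" using P Q by auto
  have "cesaro_mean n (\<lambda>j. P * E j * Q) m $$ (i,k)
      = (\<Sum>j=1..m. \<Sum>a<n. \<Sum>b<n. P $$ (i,a) * ((1 / of_nat m) * E j $$ (a,b)) * Q $$ (b,k))"
    using i k by (simp add: cesaro_mean_def index_mult_mat3[OF P E Q i k] sum_distrib_left
        sum_divide_distrib mult_ac)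
  also have "\<dots> = (\<Sum>a<n. \<Sum>b<n. \<Sum>j=1..m. P $$ (i,a) * ((1 / of_nat m) * E j $$ (a,b)) * Q $$ (b,k))"
    by (simp only: sum.swap[of _ "{1..m}"] sum.swap[of _ "{1..m}" "{..<n}"])
  also have "\<dots> = (P * cesaro_mean n E m * Q) $$ (i,k)"
    using i k by (simp add: index_mult_mat3[OF P _ Q i k] cesaro_mean_def sum_distrib_left
        sum_distrib_right)
  finally show "cesaro_mean n (\<lambda>j. P * E j * Q) m $$ (i,k) = (P * cesaro_mean n E m * Q) $$ (i,k)" .
qed (use P Q in auto)

lemma mat_trace_cesaro_mean:
  assumes "\<And>j. E j \<in> carrier_mat n n"
  shows "mat_trace (cesaro_mean n E m) = (1 / of_nat m) * (\<Sum>j=1..m. mat_trace (E j))"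
  using assms unfolding mat_trace_def cesaro_mean_def
  by (simp add: sum_distrib_left carrier_matD(1)[OF assms]) (rule sum.swap)

lemma sum_atLeast1_atMost_Suc_shift:
  fixes f :: "nat \<Rightarrow> 'a :: ab_group_add"
  shows "(\<Sum>j=1..m. f (Suc j)) = (\<Sum>j=1..m. f j) + (f (Suc m) - f 1)"
  by (induct m) (auto simp: sum.cl_ivl_Suc)

lemma mat_tendsto_cesaro_mean_Suc:
  assumes bound: "\<And>j i k. i < n \<Longrightarrow> k < n \<Longrightarrow> cmod (E j $$ (i,k)) \<le> K"
    and lim: "mat_tendsto n (cesaro_mean n E) Y"
  shows "mat_tendsto n (cesaro_mean n (\<lambda>j. E (Suc j))) Y"
  unfolding mat_tendsto_def
proof (intro allI impI)
  fix i k assume i: "i < n" and k: "k < n"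
  have "(\<lambda>m. (1 / of_nat m) * (E (Suc m) $$ (i,k) - E 1 $$ (i,k))) \<longlonglongrightarrow> (0 :: complex)"
  proof (rule tendsto_0_le[OF lim_inverse_n', of _ "2 * K"])
    have "cmod (E (Suc m) $$ (i,k) - E 1 $$ (i,k)) \<le> 2 * K" for m
      using norm_triangle_ineq4[of "E (Suc m) $$ (i,k)" "E 1 $$ (i,k)"] bound[OF i k, of "Suc m"]
        bound[OF i k, of 1] by simp
    then show "\<forall>\<^sub>F m in sequentially. norm ((1 / of_nat m) * (E (Suc m) $$ (i,k) - E 1 $$ (i,k)))
        \<le> norm (1 / real m) * (2 * K)"
      by (intro always_eventually allI) (simp add: norm_mult norm_divide divide_right_mono)
  qed
  then have "(\<lambda>m. cesaro_mean n E m $$ (i,k) + (1 / of_nat m) * (E (Suc m) $$ (i,k) - E 1 $$ (i,k)))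
      \<longlonglongrightarrow> Y $$ (i,k) + 0"
    using lim i k unfolding mat_tendsto_def by (intro tendsto_add) auto
  moreover have "cesaro_mean n (\<lambda>j. E (Suc j)) m $$ (i,k)
      = cesaro_mean n E m $$ (i,k) + (1 / of_nat m) * (E (Suc m) $$ (i,k) - E 1 $$ (i,k))" for m
    using i k sum_atLeast1_atMost_Suc_shift[of "\<lambda>j. E j $$ (i,k)" m]
    by (simp only: cesaro_mean_def index_mat case_prod_conv distrib_left)
  ultimately show "(\<lambda>m. cesaro_mean n (\<lambda>j. E (Suc j)) m $$ (i,k)) \<longlonglongrightarrow> Y $$ (i,k)" by simp
qed

lemma cesaro_mean_power_unimodular:
  fixes z :: complex
  assumes "cmod z = 1"
  shows "(\<lambda>m. (1 / of_nat m) * (\<Sum>j=1..m. z ^ j)) \<longlonglongrightarrow> (if z = 1 then 1 else 0)"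
proof (cases "z = 1")
  case True
  have "\<forall>\<^sub>F m in sequentially. (1 / of_nat m) * (\<Sum>j=1..m. z ^ j) = 1"
    using True by (auto simp: eventually_sequentially intro!: exI[of _ 1])
  then show ?thesis using True tendsto_eventually by (simp add: tendsto_eventually)
next
  case False
  define K where "K = 2 / cmod (z - 1)"
  have bound: "cmod (\<Sum>j=1..m. z ^ j) \<le> K" for m
  proof -
    have "(\<Sum>j=1..m. z ^ j) = z * (\<Sum>j<m. z ^ j)"
      by (simp add: sum.atLeast1_atMost_eq sum_distrib_left)
    also have "\<dots> = z * ((z ^ m - 1) / (z - 1))" using False by (simp add: geometric_sum)
    finally have "(\<Sum>j=1..m. z ^ j) = z * ((z ^ m - 1) / (z - 1))" .
    moreover have "cmod (z ^ m - 1) \<le> 2"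
      using norm_triangle_ineq4[of "z ^ m" 1] assms by (simp add: norm_power)
    ultimately show ?thesis using assms unfolding K_def by (simp add: norm_mult norm_divide divide_right_mono)
  qed
  have "norm ((1 / of_nat m) * (\<Sum>j=1..m. z ^ j)) \<le> norm (1 / real m) * K" for m
    using mult_left_mono[OF bound, of "1 / real m" m] by (simp add: norm_mult norm_divide)
  then have "(\<lambda>m. (1 / of_nat m) * (\<Sum>j=1..m. z ^ j)) \<longlonglongrightarrow> (0 :: complex)"
    by (intro tendsto_0_le[OF lim_inverse_n', of _ K] always_eventually allI)
  then show ?thesis using False by simp
qed

section \<open>Cesaro limits of power bounded matrices\<close>

lemma power_bounded_index_bounded:
  assumes "power_bounded d T"
  shows "\<exists>C\<ge>0. \<forall>m a b. a < d \<longrightarrow> b < d \<longrightarrow> cmod ((T ^\<^sub>m m) $$ (a,b)) \<le> C"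
proof -
  obtain C where T: "T \<in> carrier_mat d d"
    and C: "\<And>m v. v \<in> carrier_vec d \<Longrightarrow> cvec_norm ((T ^\<^sub>m m) *\<^sub>v v) \<le> C * cvec_norm v"
    using assms unfolding power_bounded_def by blast
  have "cmod ((T ^\<^sub>m m) $$ (a,b)) \<le> max C 0" if a: "a < d" and b: "b < d" for m a b
  proof -
    have "(T ^\<^sub>m m) $$ (a,b) = ((T ^\<^sub>m m) *\<^sub>v unit_vec d b) $ a" using T a b by simp
    also have "cmod \<dots> \<le> cvec_norm ((T ^\<^sub>m m) *\<^sub>v unit_vec d b)"
      using T a by (intro norm_index_le_cvec_norm) simp
    also have "\<dots> \<le> C" using C[of "unit_vec d b" m] b by (simp add: cvec_norm_unit_vec)
    finally show ?thesis by simp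
  qed
  then show ?thesis by (intro exI[of _ "max C 0"]) auto
qed

lemma cesaro_limit_invariant:
  assumes pb: "power_bounded d T" and ces: "is_cesaro_limit d T A"
  shows "mat_adjoint T * A * T = A"
proof -
  have T: "T \<in> carrier_mat d d" using pb unfolding power_bounded_def by blast
  have A: "A \<in> carrier_mat d d" using ces unfolding is_cesaro_limit_def by blast
  define E where "E j = mat_adjoint T ^\<^sub>m j * T ^\<^sub>m j" for j
  have E: "E j \<in> carrier_mat d d" for j unfolding E_def using T by simp
  have E_Suc: "E (Suc j) = mat_adjoint T * E j * T" for j
    unfolding E_def using T
    by (simp add: pow_mat_Suc_left[of "mat_adjoint T" d] mult_assoc_square[of _ d] del: pow_mat.simps(2))
      (simp add: mult_assoc_square[of _ d, symmetric])
  obtain C where "C \<ge> 0" and C: "\<And>m a b. a < d \<Longrightarrow> b < d \<Longrightarrow> cmod ((T ^\<^sub>m m) $$ (a,b)) \<le> C"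
    using power_bounded_index_bounded[OF pb] by blast
  have "cmod (E j $$ (i,k)) \<le> real d * (C * C)" if i: "i < d" and k: "k < d" for j i k
  proof -
    have "E j $$ (i,k) = (\<Sum>a<d. cnj ((T ^\<^sub>m j) $$ (a,i)) * (T ^\<^sub>m j) $$ (a,k))"
      unfolding E_def mat_adjoint_pow[OF T, symmetric] using T i k by (subst index_mult_mat_sum) auto
    also have "cmod \<dots> \<le> (\<Sum>a<d. C * C)"
      using C i k \<open>C \<ge> 0\<close> by (intro order_trans[OF norm_sum] sum_mono)
        (simp add: norm_mult mult_mono)
    finally show ?thesis by simp
  qed
  moreover have "mat_tendsto d (cesaro_mean d E) A"
    using ces unfolding is_cesaro_limit_iff E_def by blast
  ultimately have "mat_tendsto d (cesaro_mean d (\<lambda>j. E (Suc j))) A"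
    by (rule mat_tendsto_cesaro_mean_Suc)
  moreover have "mat_tendsto d (cesaro_mean d (\<lambda>j. E (Suc j))) (mat_adjoint T * A * T)"
    unfolding E_Suc cesaro_mean_mult3[OF E mat_adjoint_carrier[OF T] T]
    using \<open>mat_tendsto d (cesaro_mean d E) A\<close> T A by (intro mat_tendsto_mult3) auto
  ultimately show ?thesis using mat_tendsto_unique T A by simp
qed

lemma congruence_invariant_inverse:
  assumes T: "T \<in> carrier_mat n n" and A: "A \<in> carrier_mat n n" and B: "B \<in> carrier_mat n n"
    and AB: "A * B = 1\<^sub>m n" and BA: "B * A = 1\<^sub>m n" and inv: "mat_adjoint T * A * T = A"
  shows "T * B * mat_adjoint T = B"
proof -
  define L where "L = B * mat_adjoint T * A"
  have L: "L \<in> carrier_mat n n" unfolding L_def using T A B by simp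
  have "L * T = B * (mat_adjoint T * A * T)" unfolding L_def using T A B by (simp add: mult_assoc_square[of _ n])
  then have "L * T = 1\<^sub>m n" using inv BA by simp
  then have TL: "T * L = 1\<^sub>m n" using mat_mult_left_right_inverse[OF L T] by simp
  have "T * B * mat_adjoint T = T * B * mat_adjoint T * (A * B)" using AB T B by simp
  also have "\<dots> = (T * L) * B" unfolding L_def using T A B by (simp add: mult_assoc_square[of _ n])
  finally show ?thesis using TL B by simp
qed

lemma cesaro_limit_trace_inverse:
  assumes pb: "power_bounded d T" and ces: "is_cesaro_limit d T A"
    and B: "B \<in> carrier_mat d d" and AB: "A * B = 1\<^sub>m d" and BA: "B * A = 1\<^sub>m d"
  shows "mat_trace B = of_nat d"
proof -
  have T: "T \<in> carrier_mat d d" using pb unfolding power_bounded_def by blast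
  have A: "A \<in> carrier_mat d d" using ces unfolding is_cesaro_limit_def by blast
  define E where "E j = mat_adjoint T ^\<^sub>m j * T ^\<^sub>m j" for j
  have E: "E j \<in> carrier_mat d d" for j unfolding E_def using T by simp
  have TBT: "T * B * mat_adjoint T = B"
    by (rule congruence_invariant_inverse[OF T A B AB BA cesaro_limit_invariant[OF pb ces]])
  have invar: "T ^\<^sub>m j * B * mat_adjoint (T ^\<^sub>m j) = B" for j
  proof (induct j)
    case (Suc j)
    have "T ^\<^sub>m Suc j * B * mat_adjoint (T ^\<^sub>m Suc j)
        = T ^\<^sub>m j * (T * B * mat_adjoint T) * mat_adjoint (T ^\<^sub>m j)"
      using T B by (simp add: mat_adjoint_mult mult_assoc_square[of _ d])
    then show ?case using TBT Suc by simp
  qed (use B T in simp)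
  have trace_E: "mat_trace (B * E j * 1\<^sub>m d) = mat_trace B" for j
  proof -
    have "mat_trace (B * E j * 1\<^sub>m d) = mat_trace ((B * mat_adjoint (T ^\<^sub>m j)) * T ^\<^sub>m j)"
      unfolding E_def mat_adjoint_pow[OF T, symmetric] using B T by (simp add: mult_assoc_square[of _ d])
    also have "\<dots> = mat_trace (T ^\<^sub>m j * B * mat_adjoint (T ^\<^sub>m j))"
      using B T by (subst mat_trace_mult_comm[of _ d d]) (auto simp: mult_assoc_square[of _ d])
    finally show ?thesis using invar by simp
  qed
  have "mat_tendsto d (cesaro_mean d E) A" using ces unfolding is_cesaro_limit_iff E_def by blast
  then have "mat_tendsto d (\<lambda>m. cesaro_mean d (\<lambda>j. B * E j * 1\<^sub>m d) m) (B * A * 1\<^sub>m d)"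
    unfolding cesaro_mean_mult3[OF E B one_carrier_mat] using B A by (intro mat_tendsto_mult3) auto
  then have "(\<lambda>m. mat_trace (cesaro_mean d (\<lambda>j. B * E j * 1\<^sub>m d) m)) \<longlonglongrightarrow> of_nat d"
    using mat_tendsto_trace[of d _ "B * A * 1\<^sub>m d"] A B BA by simp
  moreover have
    "\<forall>\<^sub>F m in sequentially. mat_trace (cesaro_mean d (\<lambda>j. B * E j * 1\<^sub>m d) m) = mat_trace B"
    using B E by (auto simp: eventually_sequentially mat_trace_cesaro_mean trace_E intro!: exI[of _ 1])
  ultimately show ?thesis using tendsto_eventually LIMSEQ_unique by metis
qed

section \<open>Similarity to a unimodular diagonal matrix\<close>

lemma mat_adjoint_right_inverse:
  fixes S R :: "complex mat"
  assumes "S \<in> carrier_mat n n" "R \<in> carrier_mat n n" "S * R = 1\<^sub>m n"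
  shows "mat_adjoint R * mat_adjoint S = 1\<^sub>m n"
  using mat_adjoint_mult[of S R] assms by simp

lemma mat_adjoint_similar_mat_diag:
  fixes S R :: "complex mat"
  assumes "S \<in> carrier_mat n n" "R \<in> carrier_mat n n"
  shows "mat_adjoint (S * mat_diag n u * R) = mat_adjoint R * mat_diag n (\<lambda>a. cnj (u a)) * mat_adjoint S"
  using assms by (simp add: mat_adjoint_mult mat_adjoint_mat_diag mult_assoc_square[of _ n])

lemma pow_similar_mat_diag:
  assumes "S \<in> carrier_mat n n" "R \<in> carrier_mat n n" "S * R = 1\<^sub>m n" "R * S = 1\<^sub>m n"
  shows "(S * mat_diag n u * R) ^\<^sub>m k = S * mat_diag n (\<lambda>a. u a ^ k) * R"
  using similar_mat_wit_pow_id[of "S * mat_diag n u * R" "mat_diag n u" S R k] assms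
  by (simp add: similar_mat_wit_def mat_diag_pow)

lemma mult_pow_similar_mat_diag_vec:
  fixes S R :: "complex mat"
  assumes S: "S \<in> carrier_mat n n" and R: "R \<in> carrier_mat n n" and SR: "S * R = 1\<^sub>m n"
    and RS: "R * S = 1\<^sub>m n" and v: "v \<in> carrier_vec n"
  shows "(S * mat_diag n u * R) ^\<^sub>m k *\<^sub>v v = S *\<^sub>v (mat_diag n (\<lambda>a. u a ^ k) *\<^sub>v (R *\<^sub>v v))"
    and "R *\<^sub>v ((S * mat_diag n u * R) ^\<^sub>m k *\<^sub>v v) = mat_diag n (\<lambda>a. u a ^ k) *\<^sub>v (R *\<^sub>v v)"
proof -
  show T: "(S * mat_diag n u * R) ^\<^sub>m k *\<^sub>v v = S *\<^sub>v (mat_diag n (\<lambda>a. u a ^ k) *\<^sub>v (R *\<^sub>v v))"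
  proof -
    have "S * mat_diag n (\<lambda>a. u a ^ k) * R *\<^sub>v v = (S * mat_diag n (\<lambda>a. u a ^ k)) *\<^sub>v (R *\<^sub>v v)"
      using S R v by (intro assoc_mult_mat_vec) auto
    also have "\<dots> = S *\<^sub>v (mat_diag n (\<lambda>a. u a ^ k) *\<^sub>v (R *\<^sub>v v))"
      using S R v by (intro assoc_mult_mat_vec) auto
    finally show ?thesis unfolding pow_similar_mat_diag[OF S R SR RS] .
  qed
  have "R *\<^sub>v (S *\<^sub>v (mat_diag n (\<lambda>a. u a ^ k) *\<^sub>v (R *\<^sub>v v)))
      = (R * S) *\<^sub>v (mat_diag n (\<lambda>a. u a ^ k) *\<^sub>v (R *\<^sub>v v))"
    using S R v by (simp add: assoc_mult_mat_vec[of _ n n])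
  then show "R *\<^sub>v ((S * mat_diag n u * R) ^\<^sub>m k *\<^sub>v v) = mat_diag n (\<lambda>a. u a ^ k) *\<^sub>v (R *\<^sub>v v)"
    unfolding T RS using R v by simp
qed

lemma power_bounded_similar_unimodular_diag:
  assumes S: "S \<in> carrier_mat n n" and R: "R \<in> carrier_mat n n" and SR: "S * R = 1\<^sub>m n"
    and RS: "R * S = 1\<^sub>m n" and u: "\<forall>a<n. cmod (u a) = 1"
  shows "power_bounded n (S * mat_diag n u * R)"
proof -
  obtain CS where CS: "CS \<ge> 0" "\<forall>v\<in>carrier_vec n. cvec_norm (S *\<^sub>v v) \<le> CS * cvec_norm v"
    using cvec_norm_mult_mat_vec_bounded[OF S] by blast
  obtain CR where CR: "\<forall>v\<in>carrier_vec n. cvec_norm (R *\<^sub>v v) \<le> CR * cvec_norm v"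
    using cvec_norm_mult_mat_vec_bounded[OF R] by blast
  have "cvec_norm ((S * mat_diag n u * R) ^\<^sub>m k *\<^sub>v v) \<le> (CS * CR) * cvec_norm v"
    if v: "v \<in> carrier_vec n" for k v
  proof -
    have "cvec_norm ((S * mat_diag n u * R) ^\<^sub>m k *\<^sub>v v)
        \<le> CS * cvec_norm (mat_diag n (\<lambda>a. u a ^ k) *\<^sub>v (R *\<^sub>v v))"
      unfolding mult_pow_similar_mat_diag_vec[OF S R SR RS v] using CS(2) R v by simp
    also have "\<dots> = CS * cvec_norm (R *\<^sub>v v)"
      using cvec_norm_mat_diag_unimodular[of "R *\<^sub>v v" n] u R v by (simp add: norm_power)
    also have "\<dots> \<le> CS * (CR * cvec_norm v)" using CR v CS(1) by (simp add: mult_left_mono)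
    finally show ?thesis by (simp add: mult.assoc)
  qed
  then show ?thesis unfolding power_bounded_def using S R by auto
qed

lemma class_C1dot_similar_unimodular_diag:
  assumes S: "S \<in> carrier_mat n n" and R: "R \<in> carrier_mat n n" and SR: "S * R = 1\<^sub>m n"
    and RS: "R * S = 1\<^sub>m n" and u: "\<forall>a<n. cmod (u a) = 1"
  shows "class_C1dot n (S * mat_diag n u * R)"
  unfolding class_C1dot_def
proof
  let ?T = "S * mat_diag n u * R"
  obtain CR where CR: "\<forall>v\<in>carrier_vec n. cvec_norm (R *\<^sub>v v) \<le> CR * cvec_norm v"
    using cvec_norm_mult_mat_vec_bounded[OF R] by blast
  show "H0 n ?T \<subseteq> {0\<^sub>v n}"
  proof
    fix x assume "x \<in> H0 n ?T"
    then have x: "x \<in> carrier_vec n" and lim: "(\<lambda>k. cvec_norm (?T ^\<^sub>m k *\<^sub>v x)) \<longlonglongrightarrow> 0"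
      unfolding H0_def by auto
    have "cvec_norm (R *\<^sub>v x) = cvec_norm (R *\<^sub>v (?T ^\<^sub>m k *\<^sub>v x))" for k
      unfolding mult_pow_similar_mat_diag_vec(2)[OF S R SR RS x]
      using cvec_norm_mat_diag_unimodular[of "R *\<^sub>v x" n] u R x by (simp add: norm_power)
    also have "\<dots> k \<le> CR * cvec_norm (?T ^\<^sub>m k *\<^sub>v x)" for k using CR S R x by simp
    finally have "cvec_norm (R *\<^sub>v x) \<le> 0"
      using tendsto_mult_right_zero[OF lim, of CR] by (intro LIMSEQ_le_const) auto
    then have "R *\<^sub>v x = 0\<^sub>v n"
      using cvec_norm_eq_0_iff[of "R *\<^sub>v x" n] cvec_norm_nonneg[of "R *\<^sub>v x"] R x by simp
    then have "(S * R) *\<^sub>v x = 0\<^sub>v n" using S R x by (simp add: assoc_mult_mat_vec[of _ n n] mult_mat_vec_zero)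
    then show "x \<in> {0\<^sub>v n}" using SR x by simp
  qed
  show "{0\<^sub>v n} \<subseteq> H0 n ?T"
    unfolding H0_def using S R by (auto simp: mult_mat_vec_zero cvec_norm_eq_sqrt)
qed

lemma cesaro_limit_similar_unimodular_diag:
  fixes S R :: "complex mat"
  assumes S: "S \<in> carrier_mat n n" and R: "R \<in> carrier_mat n n" and SR: "S * R = 1\<^sub>m n"
    and RS: "R * S = 1\<^sub>m n" and u: "\<forall>a<n. cmod (u a) = 1" and inj: "inj_on u {..<n}"
  shows "is_cesaro_limit n (S * mat_diag n u * R)
           (mat_adjoint R * mat_diag n (\<lambda>a. (mat_adjoint S * S) $$ (a,a)) * R)"
proof -
  define M where "M = mat_adjoint S * S"
  define N where "N j = mat_diag n (\<lambda>a. cnj (u a) ^ j) * M * mat_diag n (\<lambda>a. u a ^ j)" for j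
  have M: "M \<in> carrier_mat n n" and N: "N j \<in> carrier_mat n n" for j
    unfolding M_def N_def using S by auto
  have aS: "mat_adjoint S \<in> carrier_mat n n" and aR: "mat_adjoint R \<in> carrier_mat n n" using S R by auto
  note adj = mat_adjoint_similar_mat_diag[OF S R]
  note pow_adj = pow_similar_mat_diag[OF aR aS mat_adjoint_right_inverse[OF S R SR]
      mat_adjoint_right_inverse[OF R S RS]]
  have E: "mat_adjoint (S * mat_diag n u * R) ^\<^sub>m j * (S * mat_diag n u * R) ^\<^sub>m j
      = mat_adjoint R * N j * R" for j
    unfolding adj pow_adj pow_similar_mat_diag[OF S R SR RS] N_def M_def using S R
    by (simp add: mult_assoc_square[of _ n])
  have "mat_tendsto n (cesaro_mean n N) (mat_diag n (\<lambda>a. M $$ (a,a)))"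
    unfolding mat_tendsto_def
  proof (intro allI impI)
    fix a b assume a: "a < n" and b: "b < n"
    have w: "cmod (cnj (u a) * u b) = 1" using u a b by (simp add: norm_mult)
    have iff: "cnj (u a) * u b = 1 \<longleftrightarrow> a = b"
    proof -
      have "cnj (u a) * u a = 1" using u a by (metis complex_norm_square mult.commute of_real_1 power_one)
      then have "cnj (u a) * u b = 1 \<longleftrightarrow> u b = u a"
        by (metis mult.commute mult_cancel_left mult_cancel_right1 mult_not_zero one_neq_zero)
      then show ?thesis using inj a b by (auto dest: inj_onD)
    qed
    have "(\<lambda>m. M $$ (a,b) * ((1 / of_nat m) * (\<Sum>j=1..m. (cnj (u a) * u b) ^ j)))
        \<longlonglongrightarrow> M $$ (a,b) * (if cnj (u a) * u b = 1 then 1 else 0)"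
      by (rule tendsto_mult_left[OF cesaro_mean_power_unimodular[OF w]])
    moreover have "M $$ (a,b) * (if cnj (u a) * u b = 1 then 1 else 0) = mat_diag n (\<lambda>a. M $$ (a,a)) $$ (a,b)"
      using iff a b by (simp add: mat_diag_def)
    moreover have "N j $$ (a,b) = M $$ (a,b) * (cnj (u a) * u b) ^ j" for j
      unfolding N_def using M a b
      by (simp add: mat_diag_mult_left[of _ n n] mat_diag_mult_right[of _ n n] power_mult_distrib)
    ultimately show
      "(\<lambda>m. cesaro_mean n N m $$ (a,b)) \<longlonglongrightarrow> mat_diag n (\<lambda>a. M $$ (a,a)) $$ (a,b)"
      using a b by (simp add: cesaro_mean_def sum_distrib_left mult_ac)
  qed
  then have "mat_tendsto n (cesaro_mean n (\<lambda>j. mat_adjoint R * N j * R))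
      (mat_adjoint R * mat_diag n (\<lambda>a. M $$ (a,a)) * R)"
    unfolding cesaro_mean_mult3[OF N aR R] using aR R N by (intro mat_tendsto_mult3) auto
  then show ?thesis unfolding is_cesaro_limit_iff E M_def using R by auto
qed

lemma exists_C11_with_cesaro_limit:
  fixes A S :: "complex mat"
  assumes A: "A \<in> carrier_mat d d" and herm: "mat_adjoint A = A"
    and S: "S \<in> carrier_mat d d" and AS: "A * (S * mat_adjoint S) = 1\<^sub>m d"
    and cols: "\<forall>j<d. cvec_norm (col S j) = 1"
  shows "\<exists>T. power_bounded d T \<and> class_C11 d T \<and> is_cesaro_limit d T A"
proof -
  define R where "R = mat_adjoint S * A"
  have R: "R \<in> carrier_mat d d" and aS: "mat_adjoint S \<in> carrier_mat d d"
    unfolding R_def using S A by auto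
  have "(S * mat_adjoint S) * A = 1\<^sub>m d" using mat_mult_left_right_inverse[OF A _ AS] S by simp
  then have SR: "S * R = 1\<^sub>m d" unfolding R_def using S A by (simp add: mult_assoc_square[of _ d])
  have RS: "R * S = 1\<^sub>m d" using mat_mult_left_right_inverse[OF S R SR] .
  define u where "u a = cis (2 * pi * real a / real d)" for a
  have u: "\<forall>a<d. cmod (u a) = 1" "\<forall>a<d. cmod (cnj (u a)) = 1" unfolding u_def by simp_all
  define T where "T = S * mat_diag d u * R"
  have "class_C1dot d (mat_adjoint T)"
    unfolding T_def mat_adjoint_similar_mat_diag[OF S R]
    by (rule class_C1dot_similar_unimodular_diag[OF mat_adjoint_carrier[OF R] aS
          mat_adjoint_right_inverse[OF S R SR] mat_adjoint_right_inverse[OF R S RS] u(2)])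
  moreover have "mat_diag d (\<lambda>a. (mat_adjoint S * S) $$ (a,a)) = 1\<^sub>m d"
    using cols cvec_norm_col_eq_1_iff[OF S] by (subst mat_diag_one[symmetric], intro mat_diag_cong) auto
  moreover have "mat_adjoint R * R = (A * (S * mat_adjoint S)) * A"
    unfolding R_def using S A herm by (simp add: mat_adjoint_mult mult_assoc_square[of _ d])
  then have "mat_adjoint R * R = A" using AS A by simp
  ultimately show ?thesis
    using power_bounded_similar_unimodular_diag[OF S R SR RS u(1)]
      class_C1dot_similar_unimodular_diag[OF S R SR RS u(1)]
      cesaro_limit_similar_unimodular_diag[OF S R SR RS u(1) inj_on_roots_of_unity[of d, folded u_def]] R
    unfolding class_C11_def class_Cdot1_def T_def by auto
qed

lemma exists_unit_columns_factor_of_trace: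
  assumes U: "unitary_mat d U" and pos: "\<forall>i<d. s i > 0"
    and trace: "mat_trace (U * mat_diag d (\<lambda>i. complex_of_real (s i)) * mat_adjoint U) = of_nat d"
  shows "\<exists>S. S \<in> carrier_mat d d \<and> invertible_mat S \<and> (\<forall>j<d. cvec_norm (col S j) = 1)
           \<and> S * mat_adjoint S = U * mat_diag d (\<lambda>i. complex_of_real (s i)) * mat_adjoint U"
proof -
  have "complex_of_real (\<Sum>i<d. s i) = complex_of_real (real d)"
    using trace unfolding mat_trace_unitary_conj[OF U mat_diag_dim] by simp
  then have sum: "(\<Sum>i<d. s i) = real d" by (simp only: of_real_eq_iff)
  obtain S0 where S0: "S0 \<in> carrier_mat d d"
    and gram: "S0 * mat_adjoint S0 = mat_diag d (\<lambda>i. complex_of_real (s i))"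
    and cols: "\<forall>j<d. cvec_norm (col S0 j) = 1"
    using exists_unit_columns_factor[OF pos sum] by blast
  have Uc: "U \<in> carrier_mat d d" and UU: "mat_adjoint U * U = 1\<^sub>m d"
    using U unfolding unitary_mat_def by auto
  define S where "S = U * S0"
  have S: "S \<in> carrier_mat d d" unfolding S_def using Uc S0 by simp
  have SS: "S * mat_adjoint S = U * mat_diag d (\<lambda>i. complex_of_real (s i)) * mat_adjoint U"
    unfolding S_def gram[symmetric] using Uc S0 by (simp add: mat_adjoint_mult mult_assoc_square[of _ d])
  have "mat_adjoint S * S = mat_adjoint S0 * ((mat_adjoint U * U) * S0)"
    unfolding S_def using Uc S0 by (simp add: mat_adjoint_mult mult_assoc_square[of _ d])
  then have "mat_adjoint S * S = mat_adjoint S0 * S0" using UU S0 by simp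
  then have unit: "\<forall>j<d. cvec_norm (col S j) = 1"
    using cols cvec_norm_col_eq_1_iff[OF S] cvec_norm_col_eq_1_iff[OF S0] by simp
  define C where "C = U * mat_diag d (\<lambda>i. 1 / complex_of_real (s i)) * mat_adjoint U"
  have C: "C \<in> carrier_mat d d" unfolding C_def using Uc by simp
  have "S * (mat_adjoint S * C) = (S * mat_adjoint S) * C" using S C by (simp add: mult_assoc_square[of _ d])
  also have "\<dots> = 1\<^sub>m d"
    unfolding SS C_def using pos by (intro unitary_conj_mat_diag_inverse[OF U]) auto
  finally have "invertible_mat S" using S C by (intro invertible_mat_if_right_inverse) auto
  then show ?thesis using S SS unit by blast
qed

lemma positive_definite_inverse:
  assumes pd: "positive_definite d A" and len: "length ts = d"
    and cp: "char_poly A = (\<Prod>t\<leftarrow>ts. [:- complex_of_real t, 1:])"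
  shows "\<exists>U B. unitary_mat d U \<and> (\<forall>i<d. ts ! i > 0) \<and> B \<in> carrier_mat d d
           \<and> A * B = 1\<^sub>m d \<and> B * A = 1\<^sub>m d
           \<and> B = U * mat_diag d (\<lambda>i. 1 / complex_of_real (ts ! i)) * mat_adjoint U
           \<and> mat_trace B = complex_of_real (\<Sum>t\<leftarrow>ts. 1 / t)"
proof -
  obtain U where U: "unitary_mat d U" and pos: "\<forall>i<d. ts ! i > 0"
    and A_eq: "A = U * mat_diag d (\<lambda>i. complex_of_real (ts ! i)) * mat_adjoint U"
    using positive_definite_unitary_diag[OF pd len cp] by blast
  define B where "B = U * mat_diag d (\<lambda>i. 1 / complex_of_real (ts ! i)) * mat_adjoint U"
  have "B \<in> carrier_mat d d" using U unfolding B_def unitary_mat_def by auto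
  moreover have "A * B = 1\<^sub>m d"
    unfolding A_eq B_def using pos by (intro unitary_conj_mat_diag_inverse[OF U]) auto
  moreover have "B * A = 1\<^sub>m d"
    using unitary_conj_mat_diag_inverse[OF U, of "\<lambda>i. 1 / complex_of_real (ts ! i)"] pos
    unfolding A_eq B_def by (simp add: less_imp_neq[symmetric])
  moreover have "(\<Sum>t\<leftarrow>ts. 1 / t) = (\<Sum>i<d. 1 / ts ! i)"
    using len by (simp add: sum_list_sum_nth atLeast0LessThan)
  then have "mat_trace B = complex_of_real (\<Sum>t\<leftarrow>ts. 1 / t)"
    unfolding B_def mat_trace_unitary_conj[OF U mat_diag_dim] by simp
  ultimately show ?thesis using U pos unfolding B_def by blast
qed

theorem mainTheorem7:
  fixes d :: nat and A :: "complex mat" and ts :: "real list"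
  assumes "d \<ge> 2"
    and "positive_definite d A"
    and "length ts = d"
    and "char_poly A = (\<Prod>t\<leftarrow>ts. [:- complex_of_real t, 1:])"
  shows "((\<exists>T. power_bounded d T \<and> class_C11 d T \<and> is_cesaro_limit d T A)
           \<longleftrightarrow> (\<Sum>t\<leftarrow>ts. 1 / t) = real d)
       \<and> ((\<Sum>t\<leftarrow>ts. 1 / t) = real d
           \<longleftrightarrow> (\<exists>S. S \<in> carrier_mat d d \<and> invertible_mat S \<and>
                 (\<forall>j<d. cvec_norm (col S j) = 1) \<and>
                 A * (S * mat_adjoint S) = 1\<^sub>m d))"
proof -
  have A: "A \<in> carrier_mat d d" and herm: "mat_adjoint A = A"
    using assms(2) unfolding positive_definite_def by auto
  obtain U B where U: "unitary_mat d U" and pos: "\<forall>i<d. ts ! i > 0" and B: "B \<in> carrier_mat d d"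
    and AB: "A * B = 1\<^sub>m d" and BA: "B * A = 1\<^sub>m d"
    and B_eq: "B = U * mat_diag d (\<lambda>i. 1 / complex_of_real (ts ! i)) * mat_adjoint U"
    and trace_B: "mat_trace B = complex_of_real (\<Sum>t\<leftarrow>ts. 1 / t)"
    using positive_definite_inverse[OF assms(2-4)] by blast
  have trace_iff: "(\<Sum>t\<leftarrow>ts. 1 / t) = real d \<longleftrightarrow> mat_trace B = of_nat d"
    unfolding trace_B by (metis of_real_eq_iff of_real_of_nat_eq)
  have inverse: "S * mat_adjoint S = B" if "A * (S * mat_adjoint S) = 1\<^sub>m d" "S \<in> carrier_mat d d" for S
    using that B BA A mult_assoc_square[of B d A "S * mat_adjoint S"] by simp
  have factor: "mat_trace B = of_nat d \<Longrightarrow> \<exists>S. S \<in> carrier_mat d d \<and> invertible_mat S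
      \<and> (\<forall>j<d. cvec_norm (col S j) = 1) \<and> S * mat_adjoint S = B"
    using exists_unit_columns_factor_of_trace[OF U, of "\<lambda>i. 1 / ts ! i"] pos B_eq by simp
  show ?thesis
  proof (intro conjI iffI)
    assume "\<exists>T. power_bounded d T \<and> class_C11 d T \<and> is_cesaro_limit d T A"
    then show "(\<Sum>t\<leftarrow>ts. 1 / t) = real d"
      using cesaro_limit_trace_inverse[OF _ _ B AB BA] trace_iff by blast
  next
    assume "(\<Sum>t\<leftarrow>ts. 1 / t) = real d"
    then show "\<exists>T. power_bounded d T \<and> class_C11 d T \<and> is_cesaro_limit d T A"
      using factor trace_iff exists_C11_with_cesaro_limit[OF A herm] AB by auto
  next
    assume "(\<Sum>t\<leftarrow>ts. 1 / t) = real d"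
    then show "\<exists>S. S \<in> carrier_mat d d \<and> invertible_mat S \<and> (\<forall>j<d. cvec_norm (col S j) = 1)
        \<and> A * (S * mat_adjoint S) = 1\<^sub>m d"
      using factor trace_iff AB by auto
  next
    assume "\<exists>S. S \<in> carrier_mat d d \<and> invertible_mat S \<and> (\<forall>j<d. cvec_norm (col S j) = 1)
        \<and> A * (S * mat_adjoint S) = 1\<^sub>m d"
    then show "(\<Sum>t\<leftarrow>ts. 1 / t) = real d"
      using inverse mat_trace_gram_unit_columns trace_iff by auto
  qed
qed

end
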